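(* Let $\Gamma$ be an extended Coxeter diagram with all vertex labels $p_i$ finite. If the Shephard group $G_\Gamma$ is finite, then the Hermitian form $H_\Gamma$ is positive definite.
   Context: An extended Coxeter diagram $\Gamma$ is a finite simplicial graph with vertex set $I$, labels $p_i\in\mathbb{Z}_{\ge2}\cup\{\infty\}$ on vertices and $m_{ij}\in\mathbb{Z}_{\ge3}\cup\{\infty\}$ on edges ($m_{ij}=2$ for non-edges, and $p_i=p_j$ whenever $m_{ij}$ is odd). $G_\Gamma=\langle s_i, i\in I\mid \mathrm{prod}(s_i,s_j;m_{ij})=\mathrm{prod}(s_j,s_i;m_{ij}),\ s_i^{p_i}=1\rangle$, with $\mathrm{prod}(a,b;m)$ the alternating word $aba\cdots$ of length $m$ (relations with $\infty$ omitted). For distinct $i,j$ joined by an edge set $\alpha_{ij}=-\left(\frac{\cos(\pi/p_i-\pi/p_j)+\cos(2\pi/m_{ij})}{2\sin(\pi/p_i)\sin(\pi/p_j)}\right)^{1/2}$; set $\alpha_{ii}=1$ and $\alpha_{ij}=0$ if $i\ne j$ are not joined by an edge. $H_\Gamma$ is the Hermitian form on $\mathbb{C}^I$ with basis $\{e_i\}$ given by $H_\Gamma(e_i,e_j)=\alpha_{ij}$. *)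

theory Defs
  imports Complex_Main "HOL-Library.Extended_Nat" "HOL-Library.Complex_Order"
begin

text \<open>An extended Coxeter diagram with finite vertex labels: vertex set I (finite),
  vertex labels p i (natural numbers \<ge> 2), edge labels m i j (extended naturals);
  m i j = 2 encodes a non-edge, an edge carries a label \<ge> 3 or infinity.\<close>

definition extended_coxeter_diagram :: "'a set \<Rightarrow> ('a \<Rightarrow> nat) \<Rightarrow> ('a \<Rightarrow> 'a \<Rightarrow> enat) \<Rightarrow> bool" where
  "extended_coxeter_diagram I p m \<longleftrightarrow>
     finite I \<and>
     (\<forall>i\<in>I. 2 \<le> p i) \<and>
     (\<forall>i\<in>I. \<forall>j\<in>I. i \<noteq> j \<longrightarrow> m i j = m j i \<and> 2 \<le> m i j) \<and>
     (\<forall>i\<in>I. \<forall>j\<in>I. \<forall>n. i \<noteq> j \<longrightarrow> m i j = enat n \<longrightarrow> odd n \<longrightarrow> p i = p j)"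

definition is_edge :: "('a \<Rightarrow> 'a \<Rightarrow> enat) \<Rightarrow> 'a \<Rightarrow> 'a \<Rightarrow> bool" where
  "is_edge m i j \<longleftrightarrow> i \<noteq> j \<and> m i j \<noteq> 2"

text \<open>Words in the generators and their inverses: (i, True) = s_i, (i, False) = s_i^-1.\<close>

definition alt_word :: "'a \<Rightarrow> 'a \<Rightarrow> nat \<Rightarrow> ('a \<times> bool) list" where
  "alt_word i j n = map (\<lambda>k. if even k then (i, True) else (j, True)) [0..<n]"

inductive shep_eq :: "'a set \<Rightarrow> ('a \<Rightarrow> nat) \<Rightarrow> ('a \<Rightarrow> 'a \<Rightarrow> enat) \<Rightarrow>
    ('a \<times> bool) list \<Rightarrow> ('a \<times> bool) list \<Rightarrow> bool"
  for I p m where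
  refl: "shep_eq I p m w w"
| sym: "shep_eq I p m u w \<Longrightarrow> shep_eq I p m w u"
| trans: "shep_eq I p m u v \<Longrightarrow> shep_eq I p m v w \<Longrightarrow> shep_eq I p m u w"
| cancel: "i \<in> I \<Longrightarrow> shep_eq I p m (u @ [(i, b), (i, \<not> b)] @ v) (u @ v)"
| power: "i \<in> I \<Longrightarrow> shep_eq I p m (u @ replicate (p i) (i, True) @ v) (u @ v)"
| braid: "i \<in> I \<Longrightarrow> j \<in> I \<Longrightarrow> i \<noteq> j \<Longrightarrow> m i j = enat n \<Longrightarrow>
           shep_eq I p m (u @ alt_word i j n @ v) (u @ alt_word j i n @ v)"

definition words_over :: "'a set \<Rightarrow> ('a \<times> bool) list set" where
  "words_over I = {w. set w \<subseteq> I \<times> UNIV}"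

definition shephard_group :: "'a set \<Rightarrow> ('a \<Rightarrow> nat) \<Rightarrow> ('a \<Rightarrow> 'a \<Rightarrow> enat) \<Rightarrow>
    ('a \<times> bool) list set set" where
  "shephard_group I p m =
     words_over I // {(u, w). u \<in> words_over I \<and> w \<in> words_over I \<and> shep_eq I p m u w}"

definition cos_2pi_over :: "enat \<Rightarrow> real" where
  "cos_2pi_over x = (case x of enat n \<Rightarrow> cos (2 * pi / real n) | \<infinity> \<Rightarrow> 1)"

definition alpha :: "('a \<Rightarrow> nat) \<Rightarrow> ('a \<Rightarrow> 'a \<Rightarrow> enat) \<Rightarrow> 'a \<Rightarrow> 'a \<Rightarrow> real" where
  "alpha p m i j =
     (if i = j then 1
      else if is_edge m i j then
        - sqrt ((cos (pi / real (p i) - pi / real (p j)) + cos_2pi_over (m i j))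
                 / (2 * sin (pi / real (p i)) * sin (pi / real (p j))))
      else 0)"

definition herm_form :: "'a set \<Rightarrow> ('a \<Rightarrow> nat) \<Rightarrow> ('a \<Rightarrow> 'a \<Rightarrow> enat) \<Rightarrow>
    ('a \<Rightarrow> complex) \<Rightarrow> ('a \<Rightarrow> complex) \<Rightarrow> complex" where
  "herm_form I p m v w = (\<Sum>i\<in>I. \<Sum>j\<in>I. complex_of_real (alpha p m i j) * v i * cnj (w j))"

definition pos_def_form :: "'a set \<Rightarrow> (('a \<Rightarrow> complex) \<Rightarrow> ('a \<Rightarrow> complex) \<Rightarrow> complex) \<Rightarrow> bool" where
  "pos_def_form I H \<longleftrightarrow> (\<forall>v. (\<exists>i\<in>I. v i \<noteq> 0) \<longrightarrow> 0 < H v v)"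

end

theory Submission
  imports Defs
begin

text \<open>
  Let the generator s_i act on C^I by the complex reflection
  rho_i v = v + (zeta_i - 1) f_i(v) e_i, where zeta_i = cis (2 pi / p_i) and
  f_i(v) = sum_k alpha_ki v_k. Then rho_i has order p_i, and the braid relation of
  length m_ij only involves the coordinates (f_i v, f_j v): there rho_j rho_i acts by a
  2 x 2 matrix with eigenvalues -cis (pi/p_i + pi/p_j +- 2 pi/m_ij), which makes the
  two alternating products of length m_ij agree. So s_i \<mapsto> rho_i is a representation
  of G_Gamma, and if G_Gamma is finite, averaging the standard inner product over its
  image gives an invariant positive definite form K. Invariance under rho_i forces
  K(e_j, e_i) = alpha_ji K(e_i, e_i); as alpha is real and symmetric, K(e_i, e_i) is
  constant along edges, and rescaling each e_i by the square root of K(e_i, e_i)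
  turns K into H_Gamma.
\<close>

section \<open>Linear recurrences of order two\<close>

lemma linear_recurrence_closed_form:
  fixes h :: "nat \<Rightarrow> 'a::comm_ring_1"
  assumes rec: "\<And>l. h (Suc (Suc l)) = (r1 + r2) * h (Suc l) - (r1 * r2) * h l"
  shows "(r1 - r2) * h l = (h 1 - r2 * h 0) * r1 ^ l - (h 1 - r1 * h 0) * r2 ^ l"
proof (induction l rule: induct_nat_012)
  case (ge2 l)
  have "(r1 - r2) * h (Suc (Suc l)) =
        (r1 + r2) * ((r1 - r2) * h (Suc l)) - (r1 * r2) * ((r1 - r2) * h l)"
    by (simp add: rec algebra_simps)
  then show ?case unfolding ge2 by (simp add: algebra_simps)
qed (simp_all add: algebra_simps)

lemma linear_recurrence_sum_closed_form:
  fixes h :: "nat \<Rightarrow> 'a::comm_ring_1"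
  assumes rec: "\<And>l. h (Suc (Suc l)) = (r1 + r2) * h (Suc l) - (r1 * r2) * h l"
  shows "(r1 - r2) * (\<Sum>l<k. h l) =
    (h 1 - r2 * h 0) * (\<Sum>l<k. r1 ^ l) - (h 1 - r1 * h 0) * (\<Sum>l<k. r2 ^ l)"
  by (simp add: sum_distrib_left sum_subtractf linear_recurrence_closed_form[of h r1 r2, OF rec])

lemma linear_recurrence_zero:
  fixes h :: "nat \<Rightarrow> 'a::comm_ring_1"
  assumes "\<And>l. h (Suc (Suc l)) = t * h (Suc l) - d * h l" and "h 0 = 0" and "h 1 = 0"
  shows "h l = 0"
  by (induction l rule: induct_nat_012) (simp_all add: assms flip: One_nat_def)

lemma funpow_comp_shift: "f (((g \<circ> f) ^^ n) x) = ((f \<circ> g) ^^ n) (f x)"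
  by (induction n) auto

section \<open>The rank two computation\<close>

text \<open>The action of rho_i and rho_j on the coordinates (f_i v, f_j v),
  for a = zeta_i, b = zeta_j and c = alpha_ij.\<close>

definition coord_refl1 :: "'a::comm_ring_1 \<Rightarrow> 'a \<Rightarrow> 'a \<times> 'a \<Rightarrow> 'a \<times> 'a" where
  "coord_refl1 a c z = (a * fst z, snd z + c * (a - 1) * fst z)"

definition coord_refl2 :: "'a::comm_ring_1 \<Rightarrow> 'a \<Rightarrow> 'a \<times> 'a \<Rightarrow> 'a \<times> 'a" where
  "coord_refl2 b c z = (fst z + c * (b - 1) * snd z, b * snd z)"

lemma coord_refl_fst_recurrence:
  "fst (((coord_refl2 b c \<circ> coord_refl1 a c) ^^ Suc (Suc l)) w) =
     (a + b + (a - 1) * (b - 1) * c\<^sup>2) * fst (((coord_refl2 b c \<circ> coord_refl1 a c) ^^ Suc l) w)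
     - (a * b) * fst (((coord_refl2 b c \<circ> coord_refl1 a c) ^^ l) w)"
  by (simp add: coord_refl1_def coord_refl2_def power2_eq_square algebra_simps)

text \<open>The difference of the two sides is a partial sum of a linear recurrence sequence whose
  characteristic roots r1, r2 are the eigenvalues of coord_refl2 b c \<circ> coord_refl1 a c.\<close>

lemma coord_refl_sums_even:
  fixes a b c r1 r2 :: "'a::idom"
  assumes trace: "r1 + r2 = a + b + (a - 1) * (b - 1) * c\<^sup>2" and det: "r1 * r2 = a * b"
    and roots: "c = 0 \<or> (r1 \<noteq> r2 \<and> r1 ^ k = r2 ^ k)"
  shows "(\<Sum>l<k. fst (coord_refl2 b c (((coord_refl1 a c \<circ> coord_refl2 b c) ^^ l) z))) =
         (\<Sum>l<k. fst (((coord_refl2 b c \<circ> coord_refl1 a c) ^^ l) z))"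
proof -
  define U where "U = coord_refl2 b c \<circ> coord_refl1 a c"
  define d where "d l = fst ((U ^^ l) (coord_refl2 b c z)) - fst ((U ^^ l) z)" for l
  have rec: "d (Suc (Suc l)) = (r1 + r2) * d (Suc l) - (r1 * r2) * d l" for l
    unfolding d_def U_def trace det coord_refl_fst_recurrence by (simp add: algebra_simps)
  have d0: "d 0 = c * (b - 1) * snd z"
    by (simp add: d_def coord_refl2_def)
  have d1: "d 1 = c * (b - 1) * snd z * (a + b + (a - 1) * (b - 1) * c\<^sup>2 - 1)"
    by (simp add: d_def U_def coord_refl2_def coord_refl1_def power2_eq_square algebra_simps)
  have "(\<Sum>l<k. d l) = 0"
    using roots
  proof
    assume "c = 0"
    then have "d l = 0" for l
      using linear_recurrence_zero[of d, OF rec] d0 d1 by simp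
    then show ?thesis by simp
  next
    assume distinct: "r1 \<noteq> r2 \<and> r1 ^ k = r2 ^ k"
    have "(r1 - r2) * (\<Sum>l<k. d l) =
        c * (b - 1) * snd z * ((r1 ^ k - 1) - (r2 ^ k - 1))"
      unfolding linear_recurrence_sum_closed_form[of d r1 r2, OF rec] d0 d1 trace[symmetric]
        power_diff_1_eq by (simp add: algebra_simps)
    then show ?thesis using distinct by simp
  qed
  then show ?thesis
    unfolding d_def funpow_comp_shift U_def by (simp add: sum_subtractf)
qed

lemma coord_refl_sums_odd:
  fixes a c r1 r2 :: "'a::idom"
  assumes trace: "r1 + r2 = a + a + (a - 1) * (a - 1) * c\<^sup>2" and det: "r1 * r2 = a * a"
    and distinct: "r1 \<noteq> r2" and roots: "r1 ^ k * (r1 - a) = r2 ^ k * (r2 - a)"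
  shows "(\<Sum>l<Suc k. fst (((coord_refl2 a c \<circ> coord_refl1 a c) ^^ l) z)) =
         (\<Sum>l<k. fst (coord_refl2 a c (((coord_refl1 a c \<circ> coord_refl2 a c) ^^ l) z)))"
proof -
  define U where "U = coord_refl2 a c \<circ> coord_refl1 a c"
  define d where "d l = fst ((U ^^ l) (U z)) - fst ((U ^^ l) (coord_refl2 a c z))" for l
  have rec: "d (Suc (Suc l)) = (r1 + r2) * d (Suc l) - (r1 * r2) * d l" for l
    unfolding d_def U_def trace det coord_refl_fst_recurrence by (simp add: algebra_simps)
  have init: "d 1 - r' * d 0 = fst z * (r - 1) * (r - a)"
    if sum: "r + r' = a + a + (a - 1) * (a - 1) * c\<^sup>2" and prod: "r * r' = a * a" for r r'
  proof -
    have r': "r' = a + a + (a - 1) * (a - 1) * c\<^sup>2 - r" using sum by (simp add: algebra_simps)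
    have "d 1 - r' * d 0 - fst z * (r - 1) * (r - a) = fst z * (r * r' - a * a)"
      unfolding r'
      by (simp add: d_def U_def coord_refl2_def coord_refl1_def power2_eq_square algebra_simps)
    then show ?thesis using prod by simp
  qed
  have init1: "d 1 - r2 * d 0 = fst z * (r1 - 1) * (r1 - a)"
    using init[OF trace det] .
  have init2: "d 1 - r1 * d 0 = fst z * (r2 - 1) * (r2 - a)"
    using init[of r2 r1] trace det by (simp add: ac_simps)
  have "(r1 - r2) * (\<Sum>l<k. d l) =
      fst z * ((r1 ^ k - 1) * (r1 - a) - (r2 ^ k - 1) * (r2 - a))"
    unfolding linear_recurrence_sum_closed_form[of d r1 r2, OF rec] init1 init2 power_diff_1_eq
    by (simp add: algebra_simps)
  also have "\<dots> = (r1 - r2) * (- fst z)"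
    using roots by (simp add: algebra_simps)
  finally have sum_d: "(\<Sum>l<k. d l) = - fst z"
    using distinct by (metis mult_left_cancel right_minus_eq)
  have "(\<Sum>l<Suc k. fst ((U ^^ l) z)) = fst z + (\<Sum>l<k. fst ((U ^^ l) (U z)))"
    unfolding sum.lessThan_Suc_shift by (simp add: funpow_Suc_right del: funpow.simps)
  also have "\<dots> = (\<Sum>l<k. fst ((U ^^ l) (coord_refl2 a c z)))"
    using sum_d unfolding d_def by (simp add: sum_subtractf algebra_simps)
  finally show ?thesis
    unfolding funpow_comp_shift U_def .
qed

section \<open>The eigenvalues in rank two\<close>

text \<open>For x = pi/p_i, y = pi/p_j, t = 2 pi/m_ij and -sqrt Q = alpha_ij, the eigenvalues of
  coord_refl2 (cis (2y)) (-sqrt Q) \<circ> coord_refl1 (cis (2x)) (-sqrt Q) are -cis (x + y +- t).\<close>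

lemma cis_double_minus_one: "cis (2 * x) - 1 = cis x * (2 * \<i> * complex_of_real (sin x))"
  by (simp add: complex_eq_iff sin_double cos_double_sin) (simp add: power2_eq_square algebra_simps)

lemma cis_add_cis_minus: "cis t + cis (- t) = complex_of_real (2 * cos t)"
  by (simp add: complex_eq_iff)

lemma cis_double_add_cis_double:
  "cis (2 * x) + cis (2 * y) = cis (x + y) * complex_of_real (2 * cos (x - y))"
  unfolding cis_add_cis_minus[symmetric] by (simp add: distrib_left cis_mult)

lemma rank2_eigenvalues_sum:
  fixes x y Q t :: real
  assumes "sin x \<noteq> 0" and "sin y \<noteq> 0" and "Q \<ge> 0"
    and "Q = (cos (x - y) + cos t) / (2 * sin x * sin y)"
  shows "- cis (x + y) * cis t + - cis (x + y) * cis (- t) =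
     cis (2 * x) + cis (2 * y) +
     (cis (2 * x) - 1) * (cis (2 * y) - 1) * (complex_of_real (- sqrt Q))\<^sup>2"
proof -
  have "(cis (2 * x) - 1) * (cis (2 * y) - 1) * (complex_of_real (- sqrt Q))\<^sup>2
      = cis (x + y) * (2 * \<i>) * (2 * \<i>) * complex_of_real (sin x * sin y * Q)"
    using \<open>Q \<ge> 0\<close> unfolding cis_double_minus_one
    by (simp add: cis_mult algebra_simps flip: of_real_power)
  also have "\<dots> = - cis (x + y) * complex_of_real (2 * (cos (x - y) + cos t))"
  proof -
    have "sin x * sin y * Q = (cos (x - y) + cos t) / 2" using assms by simp
    then show ?thesis by (simp only:) (simp add: field_simps)
  qed
  finally have "(cis (2 * x) - 1) * (cis (2 * y) - 1) * (complex_of_real (- sqrt Q))\<^sup>2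
      = - cis (x + y) * complex_of_real (2 * (cos (x - y) + cos t))" .
  moreover have "- cis (x + y) * cis t + - cis (x + y) * cis (- t) =
      - cis (x + y) * complex_of_real (2 * cos t)"
    unfolding cis_add_cis_minus[symmetric] by (simp add: algebra_simps)
  ultimately show ?thesis
    unfolding cis_double_add_cis_double by (simp add: algebra_simps)
qed

lemma rank2_eigenvalues_prod:
  "(- cis (x + y) * cis t) * (- cis (x + y) * cis (- t)) = cis (2 * x) * cis (2 * y)"
  by (simp add: cis_mult algebra_simps)

lemma rank2_eigenvalues_distinct:
  assumes "sin t \<noteq> 0"
  shows "- cis (x + y) * cis t \<noteq> - cis (x + y) * cis (- t)"
proof
  assume "- cis (x + y) * cis t = - cis (x + y) * cis (- t)"
  then have "Im (cis t) = Im (cis (- t))" by simp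
  then show False using assms by simp
qed

lemma rank2_eigenvalues_pow_even:
  assumes "real (2 * k) * t = 2 * pi"
  shows "(- cis (x + y) * cis t) ^ k = (- cis (x + y) * cis (- t)) ^ k"
proof -
  have "real k * t = pi" using assms by simp
  then have "cis (real k * t) = cis (real k * (- t))" by (simp add: complex_eq_iff)
  then show ?thesis by (simp only: power_mult_distrib DeMoivre)
qed

lemma rank2_eigenvalues_pow_odd:
  assumes "real (2 * k + 1) * t = 2 * pi"
  shows "(- cis (2 * x) * cis t) ^ k * (- cis (2 * x) * cis t - cis (2 * x)) =
         (- cis (2 * x) * cis (- t)) ^ k * (- cis (2 * x) * cis (- t) - cis (2 * x))"
proof -
  have periodic: "cis (s + 2 * pi) = cis s" for s
    by (simp add: cis_mult[symmetric])
  have "real k * t = real (Suc k) * (- t) + 2 * pi"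
    using assms by (simp add: algebra_simps)
  then have shift1: "cis (real k * t) = cis (real (Suc k) * (- t))"
    by (simp only: periodic)
  have "real (Suc k) * t = real k * (- t) + 2 * pi"
    using assms by (simp add: algebra_simps)
  then have shift2: "cis (real (Suc k) * t) = cis (real k * (- t))"
    by (simp only: periodic)
  have expand: "(- cis (2 * x) * cis s) ^ k * (- cis (2 * x) * cis s - cis (2 * x)) =
       (- cis (2 * x)) ^ Suc k * (cis (real (Suc k) * s) + cis (real k * s))" for s
  proof -
    have "(- cis (2 * x) * cis s) ^ k = (- cis (2 * x)) ^ k * cis (real k * s)"
      by (simp only: power_mult_distrib DeMoivre)
    moreover have "cis (real (Suc k) * s) = cis (real k * s) * cis s"
      by (simp add: cis_mult distrib_right add.commute)
    ultimately show ?thesis by (simp add: algebra_simps)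
  qed
  show ?thesis
    unfolding expand shift1 shift2 by (simp add: algebra_simps)
qed

section \<open>The reflection representation\<close>

lemma alt_word_0: "alt_word x y 0 = []"
  by (simp add: alt_word_def)

lemma alt_word_Suc: "alt_word x y (Suc n) = (x, True) # alt_word y x n"
proof -
  have "[0..<Suc n] = 0 # map Suc [0..<n]" by (simp add: upt_conv_Cons map_Suc_upt)
  then show ?thesis unfolding alt_word_def by simp
qed

locale extended_coxeter =
  fixes I :: "'a set" and p :: "'a \<Rightarrow> nat" and m :: "'a \<Rightarrow> 'a \<Rightarrow> enat"
  assumes diagram: "extended_coxeter_diagram I p m"
begin

lemma finite_vertices: "finite I"
  using diagram unfolding extended_coxeter_diagram_def by simp

lemma vertex_label_ge_2: "i \<in> I \<Longrightarrow> 2 \<le> p i"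
  using diagram unfolding extended_coxeter_diagram_def by simp

lemma edge_label_sym: "i \<in> I \<Longrightarrow> j \<in> I \<Longrightarrow> i \<noteq> j \<Longrightarrow> m i j = m j i"
  using diagram unfolding extended_coxeter_diagram_def by simp

lemma edge_label_ge_2: "i \<in> I \<Longrightarrow> j \<in> I \<Longrightarrow> i \<noteq> j \<Longrightarrow> 2 \<le> m i j"
  using diagram unfolding extended_coxeter_diagram_def by simp

lemma odd_edge_label_eq:
  "i \<in> I \<Longrightarrow> j \<in> I \<Longrightarrow> i \<noteq> j \<Longrightarrow> m i j = enat n \<Longrightarrow> odd n \<Longrightarrow> p i = p j"
  using diagram unfolding extended_coxeter_diagram_def by blast

lemma vertex_angle_bounds:
  assumes "k \<in> I"
  shows "0 < pi / real (p k)" and "pi / real (p k) \<le> pi / 2"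
proof -
  have "2 \<le> real (p k)" using vertex_label_ge_2[OF assms] by linarith
  then show "0 < pi / real (p k)" and "pi / real (p k) \<le> pi / 2"
    by (simp, intro divide_left_mono) auto
qed

lemma alpha_sym:
  assumes "i \<in> I" and "j \<in> I"
  shows "alpha p m i j = alpha p m j i"
proof -
  have "cos (pi / real (p i) - pi / real (p j)) = cos (pi / real (p j) - pi / real (p i))"
    by (metis cos_minus minus_diff_eq)
  then show ?thesis
    using edge_label_sym[OF assms] by (simp add: alpha_def is_edge_def ac_simps)
qed

definition zeta :: "'a \<Rightarrow> complex" where
  "zeta i = cis (2 * (pi / real (p i)))"

definition coform :: "'a \<Rightarrow> ('a \<Rightarrow> complex) \<Rightarrow> complex" where
  "coform i v = (\<Sum>k\<in>I. complex_of_real (alpha p m k i) * v k)"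

definition reflection :: "'a \<Rightarrow> ('a \<Rightarrow> complex) \<Rightarrow> ('a \<Rightarrow> complex)" where
  "reflection i v = (\<lambda>k. v k + (if k = i then (zeta i - 1) * coform i v else 0))"

definition letter_action :: "'a \<times> bool \<Rightarrow> ('a \<Rightarrow> complex) \<Rightarrow> ('a \<Rightarrow> complex)" where
  "letter_action x = (if snd x then reflection (fst x) else reflection (fst x) ^^ (p (fst x) - 1))"

definition word_action :: "('a \<times> bool) list \<Rightarrow> ('a \<Rightarrow> complex) \<Rightarrow> ('a \<Rightarrow> complex)" where
  "word_action w = foldr (\<lambda>x g. letter_action x \<circ> g) w id"

lemma word_action_Nil: "word_action [] = id"
  by (simp add: word_action_def)

lemma word_action_Cons: "word_action (x # w) = letter_action x \<circ> word_action w"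
  by (simp add: word_action_def)

lemma word_action_append: "word_action (u @ w) = word_action u \<circ> word_action w"
  by (induction u) (simp_all add: word_action_Nil word_action_Cons)

lemma word_action_replicate: "word_action (replicate n x) = letter_action x ^^ n"
  by (induction n) (simp_all add: word_action_Nil word_action_Cons)

lemma coform_add_basis:
  assumes "i \<in> I"
  shows "coform l (\<lambda>k. v k + (if k = i then c else 0)) =
    coform l v + complex_of_real (alpha p m i l) * c"
proof -
  have "(\<lambda>k. complex_of_real (alpha p m k l) * (v k + (if k = i then c else 0))) =
      (\<lambda>k. complex_of_real (alpha p m k l) * v k +
        (if k = i then complex_of_real (alpha p m k l) * c else 0))"
    by (auto simp: fun_eq_iff algebra_simps)
  then show ?thesis
    unfolding coform_def using finite_vertices assms
    by (simp only:) (simp add: sum.distrib sum.delta)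
qed

lemma coform_linear: "coform i (\<lambda>k. a * x k + b * y k) = a * coform i x + b * coform i y"
  by (simp add: coform_def sum.distrib sum_distrib_left algebra_simps)

lemma reflection_linear:
  "reflection i (\<lambda>k. a * x k + b * y k) = (\<lambda>k. a * reflection i x k + b * reflection i y k)"
  by (simp add: reflection_def coform_linear fun_eq_iff algebra_simps)

lemma word_action_linear:
  "word_action w (\<lambda>k. a * x k + b * y k) = (\<lambda>k. a * word_action w x k + b * word_action w y k)"
proof -
  have "(reflection i ^^ n) (\<lambda>k. a * x k + b * y k) =
      (\<lambda>k. a * (reflection i ^^ n) x k + b * (reflection i ^^ n) y k)" for i n x y
    by (induction n) (simp_all add: reflection_linear)
  then show ?thesis
    by (induction w arbitrary: x y)
      (simp_all add: word_action_Nil word_action_Cons letter_action_def reflection_linear)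
qed

lemma coform_reflection_self: "i \<in> I \<Longrightarrow> coform i (reflection i v) = zeta i * coform i v"
  unfolding reflection_def by (simp add: coform_add_basis alpha_def algebra_simps)

lemma reflection_funpow:
  assumes "i \<in> I"
  shows "(reflection i ^^ n) v = (\<lambda>k. v k + (if k = i then (zeta i ^ n - 1) * coform i v else 0))"
proof (induction n)
  case (Suc n)
  have "coform i ((reflection i ^^ n) v) = zeta i ^ n * coform i v"
    unfolding Suc.IH using assms by (simp add: coform_add_basis alpha_def algebra_simps)
  then show ?case
    unfolding funpow.simps comp_def reflection_def[of i "(reflection i ^^ n) v"]
    unfolding Suc.IH by (auto simp: fun_eq_iff algebra_simps)
qed (simp add: fun_eq_iff)

lemma zeta_neq_1:
  assumes "i \<in> I"
  shows "zeta i \<noteq> 1"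
proof (cases "p i = 2")
  case True
  then show ?thesis unfolding zeta_def by (simp add: complex_eq_iff)
next
  case False
  then have "2 < p i" using vertex_label_ge_2[OF assms] by simp
  then have "0 < 2 * (pi / real (p i))" and "2 * (pi / real (p i)) < pi"
    by (simp_all add: field_simps)
  then have "0 < Im (zeta i)"
    unfolding zeta_def by (simp add: sin_gt_zero)
  then show ?thesis by auto
qed

lemma reflection_order: "i \<in> I \<Longrightarrow> reflection i ^^ p i = id"
proof -
  assume i: "i \<in> I"
  then have "zeta i ^ p i = 1"
    using vertex_label_ge_2 unfolding zeta_def DeMoivre by simp
  then show ?thesis using reflection_funpow[OF i] by (simp add: fun_eq_iff)
qed

lemma letter_action_cancel:
  assumes "i \<in> I"
  shows "letter_action (i, b) (letter_action (i, \<not> b) v) = v"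
proof -
  have "Suc (p i - 1) = p i" using vertex_label_ge_2[OF assms] by simp
  then have "reflection i \<circ> reflection i ^^ (p i - 1) = id"
    and "reflection i ^^ (p i - 1) \<circ> reflection i = id"
    using reflection_order[OF assms] by (metis funpow.simps(2), metis funpow_Suc_right)
  then show ?thesis by (cases b) (simp_all add: letter_action_def pointfree_idE)
qed

end

section \<open>The braid relations\<close>

locale vertex_pair = extended_coxeter +
  fixes i j :: 'a
  assumes i_mem: "i \<in> I" and j_mem: "j \<in> I" and distinct: "i \<noteq> j"
begin

definition Ri :: "complex \<times> complex \<Rightarrow> complex \<times> complex" where
  "Ri = coord_refl1 (zeta i) (complex_of_real (alpha p m i j))"

definition Rj :: "complex \<times> complex \<Rightarrow> complex \<times> complex" where
  "Rj = coord_refl2 (zeta j) (complex_of_real (alpha p m i j))"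

definition gen :: "bool \<Rightarrow> 'a" where
  "gen b = (if b then i else j)"

definition coords :: "('a \<Rightarrow> complex) \<Rightarrow> complex \<times> complex" where
  "coords v = (coform i v, coform j v)"

definition shift :: "('a \<Rightarrow> complex) \<Rightarrow> complex \<times> complex \<Rightarrow> 'a \<Rightarrow> complex" where
  "shift v d = (\<lambda>k. v k + (if k = i then fst d else 0) + (if k = j then snd d else 0))"

primrec coord_word :: "bool \<Rightarrow> nat \<Rightarrow> complex \<times> complex \<Rightarrow> complex \<times> complex" where
  "coord_word b 0 = id"
| "coord_word b (Suc n) = (if b then Ri else Rj) \<circ> coord_word (\<not> b) n"

primrec disp_word :: "bool \<Rightarrow> nat \<Rightarrow> complex \<times> complex \<Rightarrow> complex \<times> complex" where
  "disp_word b 0 z = (0, 0)"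
| "disp_word b (Suc n) z =
    (if b then (fst (disp_word (\<not> b) n z) + (zeta i - 1) * fst (coord_word (\<not> b) n z),
               snd (disp_word (\<not> b) n z))
     else (fst (disp_word (\<not> b) n z),
           snd (disp_word (\<not> b) n z) + (zeta j - 1) * snd (coord_word (\<not> b) n z)))"

lemma coords_reflection_gen: "coords (reflection (gen b) v) = (if b then Ri else Rj) (coords v)"
  using coform_reflection_self[OF i_mem] coform_reflection_self[OF j_mem]
    coform_add_basis[OF i_mem] coform_add_basis[OF j_mem] alpha_sym[OF i_mem j_mem]
  by (simp add: gen_def coords_def Ri_def Rj_def coord_refl1_def coord_refl2_def reflection_def
      algebra_simps)

lemma reflection_gen_shift:
  "reflection (gen b) v =
    shift v (if b then ((zeta i - 1) * fst (coords v), 0) else (0, (zeta j - 1) * snd (coords v)))"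
  using distinct by (auto simp: gen_def reflection_def shift_def coords_def fun_eq_iff)

lemma shift_shift: "shift (shift v d) d' = shift v (fst d + fst d', snd d + snd d')"
  by (simp add: shift_def fun_eq_iff algebra_simps)

lemma word_action_alt_word:
  "word_action (alt_word (gen b) (gen (\<not> b)) n) v = shift v (disp_word b n (coords v)) \<and>
   coords (word_action (alt_word (gen b) (gen (\<not> b)) n) v) = coord_word b n (coords v)"
proof (induction n arbitrary: b)
  case 0
  then show ?case by (simp add: alt_word_0 word_action_Nil shift_def fun_eq_iff)
next
  case (Suc n)
  let ?w = "word_action (alt_word (gen (\<not> b)) (gen b) n) v"
  have step: "word_action (alt_word (gen b) (gen (\<not> b)) (Suc n)) v = reflection (gen b) ?w"
    by (simp add: alt_word_Suc word_action_Cons letter_action_def)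
  have IH: "?w = shift v (disp_word (\<not> b) n (coords v))" "coords ?w = coord_word (\<not> b) n (coords v)"
    using Suc.IH[of "\<not> b"] unfolding not_not by blast+
  show ?case
  proof
    show "word_action (alt_word (gen b) (gen (\<not> b)) (Suc n)) v =
        shift v (disp_word b (Suc n) (coords v))"
      unfolding step reflection_gen_shift using IH by (cases b) (simp_all add: shift_shift)
    show "coords (word_action (alt_word (gen b) (gen (\<not> b)) (Suc n)) v) =
        coord_word b (Suc n) (coords v)"
      unfolding step coords_reflection_gen using IH by (cases b) simp_all
  qed
qed

definition Rij :: "complex \<times> complex \<Rightarrow> complex \<times> complex" where
  "Rij = Ri \<circ> Rj"

definition Rji :: "complex \<times> complex \<Rightarrow> complex \<times> complex" where
  "Rji = Rj \<circ> Ri"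

lemma coord_word_even: "coord_word b (2 * k) = (if b then Rij else Rji) ^^ k"
  by (induction k) (auto simp: Rij_def Rji_def)

lemma disp_word_even:
  "fst (disp_word True (2 * k) z) = (zeta i - 1) * (\<Sum>l<k. fst (Rj ((Rij ^^ l) z))) \<and>
   snd (disp_word True (2 * k) z) = (zeta j - 1) * (\<Sum>l<k. snd ((Rij ^^ l) z)) \<and>
   fst (disp_word False (2 * k) z) = (zeta i - 1) * (\<Sum>l<k. fst ((Rji ^^ l) z)) \<and>
   snd (disp_word False (2 * k) z) = (zeta j - 1) * (\<Sum>l<k. snd (Ri ((Rji ^^ l) z)))"
proof (induction k)
  case (Suc k)
  have "2 * Suc k = Suc (Suc (2 * k))" by simp
  then show ?case using Suc by (simp add: coord_word_even distrib_left)
qed simp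

lemma swap_Ri:
  "prod.swap (Ri w) = coord_refl2 (zeta i) (complex_of_real (alpha p m i j)) (prod.swap w)"
  by (simp add: Ri_def coord_refl1_def coord_refl2_def)

lemma swap_Rj:
  "prod.swap (Rj w) = coord_refl1 (zeta j) (complex_of_real (alpha p m i j)) (prod.swap w)"
  by (simp add: Rj_def coord_refl1_def coord_refl2_def)

lemma swap_Rij_funpow:
  "prod.swap ((Rij ^^ l) z) =
    ((coord_refl2 (zeta i) (complex_of_real (alpha p m i j)) \<circ>
      coord_refl1 (zeta j) (complex_of_real (alpha p m i j))) ^^ l) (prod.swap z)"
  by (induction l) (simp_all add: Rij_def swap_Ri swap_Rj)

lemma swap_Rji_funpow:
  "prod.swap ((Rji ^^ l) z) =
    ((coord_refl1 (zeta j) (complex_of_real (alpha p m i j)) \<circ>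
      coord_refl2 (zeta i) (complex_of_real (alpha p m i j))) ^^ l) (prod.swap z)"
  by (induction l) (simp_all add: Rji_def swap_Ri swap_Rj)

lemma braid_relation_if_disp_word_eq:
  assumes "\<And>z. disp_word True n z = disp_word False n z"
  shows "word_action (alt_word i j n) = word_action (alt_word j i n)"
proof
  fix v
  show "word_action (alt_word i j n) v = word_action (alt_word j i n) v"
    using word_action_alt_word[of True n v] word_action_alt_word[of False n v] assms
    by (simp add: gen_def)
qed

lemma braid_relation_even:
  fixes r1 r2 :: complex
  assumes n: "n = 2 * k"
    and trace: "r1 + r2 =
      zeta i + zeta j + (zeta i - 1) * (zeta j - 1) * (complex_of_real (alpha p m i j))\<^sup>2"
    and det: "r1 * r2 = zeta i * zeta j"
    and roots: "alpha p m i j = 0 \<or> (r1 \<noteq> r2 \<and> r1 ^ k = r2 ^ k)"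
  shows "word_action (alt_word i j n) = word_action (alt_word j i n)"
proof (rule braid_relation_if_disp_word_eq)
  fix z
  have roots': "complex_of_real (alpha p m i j) = 0 \<or> (r1 \<noteq> r2 \<and> r1 ^ k = r2 ^ k)"
    using roots by simp
  have fst_eq: "(\<Sum>l<k. fst (Rj ((Rij ^^ l) z))) = (\<Sum>l<k. fst ((Rji ^^ l) z))"
    using coord_refl_sums_even[OF trace det roots', of z]
    by (simp add: Rij_def Rji_def Ri_def Rj_def)
  have trace': "r1 + r2 =
      zeta j + zeta i + (zeta j - 1) * (zeta i - 1) * (complex_of_real (alpha p m i j))\<^sup>2"
    and det': "r1 * r2 = zeta j * zeta i"
    using trace det by (simp_all add: algebra_simps)
  have snd_eq: "(\<Sum>l<k. snd ((Rij ^^ l) z)) = (\<Sum>l<k. snd (Ri ((Rji ^^ l) z)))"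
    using coord_refl_sums_even[OF trace' det' roots', of "prod.swap z"]
    by (simp flip: swap_Rij_funpow swap_Rji_funpow swap_Ri)
  show "disp_word True n z = disp_word False n z"
    using disp_word_even[of k z] fst_eq snd_eq unfolding n by (simp add: prod_eq_iff)
qed

lemma braid_relation_odd:
  fixes r1 r2 :: complex
  assumes n: "n = 2 * k + 1" and same_zeta: "zeta j = zeta i"
    and trace: "r1 + r2 =
      zeta i + zeta i + (zeta i - 1) * (zeta i - 1) * (complex_of_real (alpha p m i j))\<^sup>2"
    and det: "r1 * r2 = zeta i * zeta i"
    and distinct: "r1 \<noteq> r2" and roots: "r1 ^ k * (r1 - zeta i) = r2 ^ k * (r2 - zeta i)"
  shows "word_action (alt_word i j n) = word_action (alt_word j i n)"
proof (rule braid_relation_if_disp_word_eq)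
  fix z
  have fst_eq: "(\<Sum>l<Suc k. fst ((Rji ^^ l) z)) = (\<Sum>l<k. fst (Rj ((Rij ^^ l) z)))"
    using coord_refl_sums_odd[OF trace det distinct roots, of z] same_zeta
    by (simp add: Rij_def Rji_def Ri_def Rj_def)
  have snd_eq: "(\<Sum>l<k. snd (Ri ((Rji ^^ l) z))) = (\<Sum>l<Suc k. snd ((Rij ^^ l) z))"
    using coord_refl_sums_odd[OF trace det distinct roots, of "prod.swap z"] same_zeta
    unfolding fst_swap[symmetric] swap_Rij_funpow swap_Rji_funpow swap_Ri by simp
  have "n = Suc (2 * k)" using n by simp
  then show "disp_word True n z = disp_word False n z"
    using disp_word_even[of k z] fst_eq snd_eq same_zeta
    by (simp add: prod_eq_iff coord_word_even flip: distrib_left)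
qed

text \<open>For odd m_ij it is the condition p_i = p_j that makes the radicand in the definition
  of alpha nonnegative.\<close>

lemma cos_sum_nonneg:
  assumes label: "m i j = enat n" and "3 \<le> n"
  shows "0 \<le> cos (pi / real (p i) - pi / real (p j)) + cos (2 * pi / real n)"
proof (cases "odd n")
  case True
  then have "p i = p j" using odd_edge_label_eq[OF i_mem j_mem distinct label] by simp
  then have "cos (pi / real (p i) - pi / real (p j)) = 1" by simp
  then show ?thesis using cos_ge_minus_one[of "2 * pi / real n"] by linarith
next
  case False
  then have "4 \<le> n" using \<open>3 \<le> n\<close> by presburger
  then have "2 * pi / real n \<le> pi / 2" by (simp add: field_simps)
  moreover have "0 \<le> 2 * pi / real n" by simp
  ultimately have "0 \<le> cos (2 * pi / real n)"
    using pi_gt_zero by (intro cos_ge_zero) linarith+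
  moreover have "0 \<le> cos (pi / real (p i) - pi / real (p j))"
    using vertex_angle_bounds[OF i_mem] vertex_angle_bounds[OF j_mem] by (intro cos_ge_zero) auto
  ultimately show ?thesis by simp
qed

lemma edge_eigenvalues:
  assumes label: "m i j = enat n" and "3 \<le> n"
  defines "r1 \<equiv> - cis (pi / real (p i) + pi / real (p j)) * cis (2 * pi / real n)"
    and "r2 \<equiv> - cis (pi / real (p i) + pi / real (p j)) * cis (- (2 * pi / real n))"
  shows "r1 + r2 =
      zeta i + zeta j + (zeta i - 1) * (zeta j - 1) * (complex_of_real (alpha p m i j))\<^sup>2"
    and "r1 * r2 = zeta i * zeta j" and "r1 \<noteq> r2"
proof -
  define x where "x = pi / real (p i)"
  define y where "y = pi / real (p j)"
  define t where "t = 2 * pi / real n"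
  define Q where "Q = (cos (x - y) + cos t) / (2 * sin x * sin y)"
  have sin_x: "sin x > 0" and sin_y: "sin y > 0"
    using vertex_angle_bounds[OF i_mem] vertex_angle_bounds[OF j_mem] pi_gt_zero
    unfolding x_def y_def by (intro sin_gt_zero; linarith)+
  have "0 \<le> Q"
    using cos_sum_nonneg[OF label \<open>3 \<le> n\<close>] sin_x sin_y unfolding Q_def x_def y_def t_def by simp
  have "complex_of_real (alpha p m i j) = complex_of_real (- sqrt Q)"
    using label distinct \<open>3 \<le> n\<close>
    by (simp add: alpha_def is_edge_def numeral_eq_enat cos_2pi_over_def Q_def x_def y_def t_def)
  moreover have "zeta i = cis (2 * x)" and "zeta j = cis (2 * y)"
    unfolding zeta_def x_def y_def by simp_all
  ultimately show "r1 + r2 =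
      zeta i + zeta j + (zeta i - 1) * (zeta j - 1) * (complex_of_real (alpha p m i j))\<^sup>2"
    and "r1 * r2 = zeta i * zeta j"
    unfolding r1_def r2_def x_def[symmetric] y_def[symmetric] t_def[symmetric]
    using rank2_eigenvalues_sum sin_x sin_y \<open>0 \<le> Q\<close> Q_def rank2_eigenvalues_prod by simp_all
  have "0 < t" "t < pi"
    using \<open>3 \<le> n\<close> unfolding t_def by (auto simp: field_simps)
  then have "0 < sin t" by (rule sin_gt_zero)
  then show "r1 \<noteq> r2"
    unfolding r1_def r2_def t_def[symmetric] by (intro rank2_eigenvalues_distinct) simp
qed

lemma braid_relation:
  assumes label: "m i j = enat n"
  shows "word_action (alt_word i j n) = word_action (alt_word j i n)"
proof -
  define x where "x = pi / real (p i)"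
  define y where "y = pi / real (p j)"
  define t where "t = 2 * pi / real n"
  have "2 \<le> n"
    using edge_label_ge_2[OF i_mem j_mem distinct] label by (simp add: numeral_eq_enat)
  then consider "n = 2" | "3 \<le> n" "even n" | "3 \<le> n" "odd n"
    by linarith
  then show ?thesis
  proof cases
    case 1
    then have "alpha p m i j = 0"
      using label distinct by (simp add: alpha_def is_edge_def numeral_eq_enat)
    then show ?thesis
      by (intro braid_relation_even[of n 1 "zeta i" "zeta j"]) (use 1 in simp_all)
  next
    case 2
    then obtain k where k: "n = 2 * k" by (blast elim: evenE)
    have "real (2 * k) * t = 2 * pi"
      using 2 k unfolding t_def by simp
    then have "(- cis (x + y) * cis t) ^ k = (- cis (x + y) * cis (- t)) ^ k"
      by (rule rank2_eigenvalues_pow_even)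
    then show ?thesis
      using braid_relation_even[OF k edge_eigenvalues(1,2)[OF label \<open>3 \<le> n\<close>]]
        edge_eigenvalues(3)[OF label \<open>3 \<le> n\<close>]
      unfolding x_def y_def t_def by blast
  next
    case 3
    then obtain k where k: "n = 2 * k + 1" by (blast elim: oddE)
    have "p i = p j" using odd_edge_label_eq[OF i_mem j_mem distinct label] 3 by simp
    then have "y = x" and same_zeta: "zeta j = zeta i" and zeta_i: "zeta i = cis (2 * x)"
      unfolding x_def y_def zeta_def by simp_all
    have "real (2 * k + 1) * t = 2 * pi"
      using 3 k unfolding t_def by simp
    then have "(- cis (2 * x) * cis t) ^ k * (- cis (2 * x) * cis t - cis (2 * x)) =
        (- cis (2 * x) * cis (- t)) ^ k * (- cis (2 * x) * cis (- t) - cis (2 * x))"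
      by (rule rank2_eigenvalues_pow_odd)
    moreover note edge_eigenvalues[OF label \<open>3 \<le> n\<close>]
    ultimately show ?thesis
      using braid_relation_odd[OF k same_zeta]
      unfolding x_def[symmetric] y_def[symmetric] t_def[symmetric] \<open>y = x\<close> same_zeta zeta_i
      unfolding mult_2 by blast
  qed
qed

end

context extended_coxeter
begin

lemma word_action_shep_eq: "shep_eq I p m u w \<Longrightarrow> word_action u = word_action w"
proof (induction rule: shep_eq.induct)
  case (cancel i u b v)
  then show ?case
    by (simp add: word_action_append word_action_Cons letter_action_cancel comp_def)
next
  case (power i u v)
  then show ?case
    by (simp add: word_action_append word_action_replicate letter_action_def reflection_order)
next
  case (braid i j n u v)
  then interpret vertex_pair I p m i j by unfold_locales
  show ?case using braid_relation[OF braid(4)] by (simp add: word_action_append)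
qed simp_all

end

section \<open>The invariant Hermitian form\<close>

lemma finite_image_if_finite_quotient:
  assumes "finite (A // r)" and "\<And>x. x \<in> A \<Longrightarrow> (x, x) \<in> r"
    and "\<And>x y. (x, y) \<in> r \<Longrightarrow> f x = f y"
  shows "finite (f ` A)"
proof (rule finite_subset)
  show "f ` A \<subseteq> (\<Union>C\<in>A // r. f ` C)"
    using assms(2) by (auto intro: quotientI)
  have "f ` (r `` {x}) \<subseteq> {f x}" for x
    using assms(3) by auto
  then show "finite (\<Union>C\<in>A // r. f ` C)"
    using assms(1) by (auto elim!: quotientE intro: finite_subset)
qed

locale finite_shephard = extended_coxeter +
  assumes finite_group: "finite (shephard_group I p m)"
begin

definition reflection_group :: "(('a \<Rightarrow> complex) \<Rightarrow> ('a \<Rightarrow> complex)) set" where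
  "reflection_group = word_action ` words_over I"

lemma finite_reflection_group: "finite reflection_group"
  unfolding reflection_group_def
proof (rule finite_image_if_finite_quotient)
  show "finite (words_over I // {(u, w). u \<in> words_over I \<and> w \<in> words_over I \<and> shep_eq I p m u w})"
    using finite_group unfolding shephard_group_def .
qed (auto intro: shep_eq.refl word_action_shep_eq)

lemma id_in_reflection_group: "id \<in> reflection_group"
proof -
  have "[] \<in> words_over I" by (simp add: words_over_def)
  then show ?thesis unfolding reflection_group_def using word_action_Nil by force
qed

lemma reflection_group_comp_reflection:
  assumes "g \<in> reflection_group" and i: "i \<in> I"
  shows "g \<circ> reflection i \<in> reflection_group"
proof -
  obtain w where w: "w \<in> words_over I" "g = word_action w"
    using assms(1) unfolding reflection_group_def by blast
  have "w @ [(i, True)] \<in> words_over I" using w(1) i by (simp add: words_over_def)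
  moreover have "word_action (w @ [(i, True)]) = g \<circ> reflection i"
    using w(2) by (simp add: word_action_append word_action_Cons word_action_Nil letter_action_def)
  ultimately show ?thesis unfolding reflection_group_def by force
qed

lemma reflection_group_linear:
  "g \<in> reflection_group \<Longrightarrow> g (\<lambda>k. a * x k + b * y k) = (\<lambda>k. a * g x k + b * g y k)"
  unfolding reflection_group_def using word_action_linear by blast

definition avg_form :: "('a \<Rightarrow> complex) \<Rightarrow> ('a \<Rightarrow> complex) \<Rightarrow> complex" where
  "avg_form x y = (\<Sum>g\<in>reflection_group. \<Sum>k\<in>I. g x k * cnj (g y k))"

lemma avg_form_linear_left:
  "avg_form (\<lambda>k. a * x k + b * y k) z = a * avg_form x z + b * avg_form y z"
  unfolding avg_form_def
  by (simp add: reflection_group_linear sum.distrib sum_distrib_left algebra_simps cong: sum.cong)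

lemma avg_form_cnj: "avg_form y x = cnj (avg_form x y)"
  unfolding avg_form_def by (simp add: mult.commute)

lemma avg_form_linear_right:
  "avg_form z (\<lambda>k. a * x k + b * y k) = cnj a * avg_form z x + cnj b * avg_form z y"
  by (subst (1 2 3) avg_form_cnj) (simp add: avg_form_linear_left)

lemma avg_form_sum_left:
  assumes "finite L"
  shows "avg_form (\<lambda>k. \<Sum>l\<in>L. c l * F l k) y = (\<Sum>l\<in>L. c l * avg_form (F l) y)"
  using assms
proof (induction L rule: finite_induct)
  case empty
  then show ?case using avg_form_linear_left[of 0 y 0 y y] by simp
next
  case (insert a L)
  then show ?case
    using avg_form_linear_left[of "c a" "F a" 1 "\<lambda>k. \<Sum>l\<in>L. c l * F l k" y] by simp
qed

lemma avg_form_sum_right: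
  assumes "finite L"
  shows "avg_form y (\<lambda>k. \<Sum>l\<in>L. c l * F l k) = (\<Sum>l\<in>L. cnj (c l) * avg_form y (F l))"
  by (subst (1 2) avg_form_cnj) (simp add: avg_form_sum_left[OF assms])

lemma avg_form_reflection_invariant:
  assumes i: "i \<in> I"
  shows "avg_form (reflection i x) (reflection i y) = avg_form x y"
proof -
  define h where "h g = g \<circ> reflection i" for g :: "('a \<Rightarrow> complex) \<Rightarrow> ('a \<Rightarrow> complex)"
  have right_inverse: "reflection i (letter_action (i, False) v) = v" for v
    using letter_action_cancel[OF i, of True] by (simp add: letter_action_def)
  have inj: "inj_on h reflection_group"
  proof
    fix g g' assume "h g = h g'"
    then have "g (reflection i (letter_action (i, False) v)) =
        g' (reflection i (letter_action (i, False) v))" for v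
      unfolding h_def by (metis comp_apply)
    then have "g v = g' v" for v
      by (simp only: right_inverse)
    then show "g = g'" by blast
  qed
  have "h ` reflection_group \<subseteq> reflection_group"
    using reflection_group_comp_reflection[OF _ i] by (auto simp: h_def)
  then have "h ` reflection_group = reflection_group"
    by (rule endo_inj_surj[OF finite_reflection_group _ inj])
  then have "avg_form x y = (\<Sum>g\<in>h ` reflection_group. \<Sum>k\<in>I. g x k * cnj (g y k))"
    unfolding avg_form_def by simp
  also have "\<dots> = avg_form (reflection i x) (reflection i y)"
    unfolding avg_form_def h_def by (simp add: sum.reindex[OF inj[unfolded h_def]])
  finally show ?thesis by simp
qed

lemma avg_form_pos:
  assumes "\<exists>k\<in>I. x k \<noteq> 0"
  shows "0 < avg_form x x"
proof -
  have "avg_form x x = complex_of_real (\<Sum>g\<in>reflection_group. \<Sum>k\<in>I. (cmod (g x k))\<^sup>2)"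
    unfolding avg_form_def of_real_sum complex_norm_square ..
  moreover have "0 < (\<Sum>g\<in>reflection_group. \<Sum>k\<in>I. (cmod (g x k))\<^sup>2)"
  proof -
    obtain k0 where "k0 \<in> I" "x k0 \<noteq> 0" using assms by blast
    then have "0 < (\<Sum>k\<in>I. (cmod (id x k))\<^sup>2)"
      using finite_vertices by (intro sum_pos2) auto
    also have "\<dots> \<le> (\<Sum>g\<in>reflection_group. \<Sum>k\<in>I. (cmod (g x k))\<^sup>2)"
      using id_in_reflection_group finite_reflection_group
      by (intro member_le_sum[where f = "\<lambda>g. \<Sum>k\<in>I. (cmod (g x k))\<^sup>2"])
        (auto simp: id_def intro: sum_nonneg)
    finally show ?thesis .
  qed
  ultimately show ?thesis by (simp add: less_complex_def)
qed

definition unit_vec :: "'a \<Rightarrow> 'a \<Rightarrow> complex" where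
  "unit_vec i = (\<lambda>k. if k = i then 1 else 0)"

lemma coform_unit_vec: "j \<in> I \<Longrightarrow> coform i (unit_vec j) = complex_of_real (alpha p m j i)"
  using finite_vertices
  by (simp add: coform_def unit_vec_def if_distrib[of "\<lambda>x. _ * x"] sum.delta cong: if_cong)

text \<open>unit_vec j - alpha_ji unit_vec i is fixed by reflection i, whereas unit_vec i is an
  eigenvector with eigenvalue zeta i \<noteq> 1; invariance of avg_form makes them orthogonal.\<close>

lemma avg_form_unit_vec:
  assumes i: "i \<in> I" and j: "j \<in> I"
  shows "avg_form (unit_vec j) (unit_vec i) =
    complex_of_real (alpha p m j i) * avg_form (unit_vec i) (unit_vec i)"
proof -
  define v where "v = (\<lambda>k. 1 * unit_vec j k + (- complex_of_real (alpha p m j i)) * unit_vec i k)"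
  have "coform i v = 0"
    unfolding v_def coform_linear coform_unit_vec[OF i] coform_unit_vec[OF j]
    by (simp add: alpha_def)
  then have fixed: "reflection i v = v"
    by (simp add: reflection_def fun_eq_iff)
  have eigen: "reflection i (unit_vec i) = (\<lambda>k. zeta i * unit_vec i k + 0 * unit_vec i k)"
    unfolding reflection_def coform_unit_vec[OF i] by (auto simp: alpha_def unit_vec_def fun_eq_iff)
  have "avg_form v (unit_vec i) = cnj (zeta i) * avg_form v (unit_vec i)"
    using avg_form_reflection_invariant[OF i, of v "unit_vec i"]
    unfolding fixed eigen avg_form_linear_right by simp
  moreover have "cnj (zeta i) \<noteq> 1"
    using zeta_neq_1[OF i] by (metis complex_cnj_one complex_cnj_cnj)
  ultimately have "avg_form v (unit_vec i) = 0"
    by (metis mult_cancel_right2)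
  then show ?thesis
    unfolding v_def avg_form_linear_left by simp
qed

definition unit_norm :: "'a \<Rightarrow> real" where
  "unit_norm i = Re (avg_form (unit_vec i) (unit_vec i))"

lemma avg_form_unit_vec_pos: "i \<in> I \<Longrightarrow> 0 < avg_form (unit_vec i) (unit_vec i)"
  by (rule avg_form_pos) (auto simp: unit_vec_def)

lemma unit_norm_pos: "i \<in> I \<Longrightarrow> 0 < unit_norm i"
  using avg_form_unit_vec_pos unfolding unit_norm_def less_complex_def by simp

lemma avg_form_unit_vec_self:
  "i \<in> I \<Longrightarrow> avg_form (unit_vec i) (unit_vec i) = complex_of_real (unit_norm i)"
  using avg_form_unit_vec_pos unfolding unit_norm_def less_complex_def complex_eq_iff by simp

lemma avg_form_unit_vecs:
  assumes "l \<in> I" and "l' \<in> I"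
  shows "avg_form (unit_vec l) (unit_vec l') = complex_of_real (alpha p m l l' * unit_norm l')"
  by (subst avg_form_unit_vec[OF assms(2,1)]) (simp add: avg_form_unit_vec_self[OF assms(2)])

lemma unit_norm_eq_if_alpha_nonzero:
  assumes l: "l \<in> I" and l': "l' \<in> I" and "alpha p m l l' \<noteq> 0"
  shows "unit_norm l = unit_norm l'"
proof -
  have "avg_form (unit_vec l) (unit_vec l') = cnj (avg_form (unit_vec l') (unit_vec l))"
    by (rule avg_form_cnj)
  then have "complex_of_real (alpha p m l l' * unit_norm l') =
      cnj (complex_of_real (alpha p m l' l * unit_norm l))"
    unfolding avg_form_unit_vecs[OF l l'] avg_form_unit_vecs[OF l' l] .
  then have "alpha p m l l' * unit_norm l' = alpha p m l l' * unit_norm l"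
    unfolding complex_cnj_complex_of_real of_real_eq_iff alpha_sym[OF l l'] .
  then show ?thesis
    using assms(3) by simp
qed

definition rescale :: "('a \<Rightarrow> complex) \<Rightarrow> 'a \<Rightarrow> complex" where
  "rescale v k = (if k \<in> I then v k / complex_of_real (sqrt (unit_norm k)) else 0)"

lemma avg_form_expand:
  assumes x: "\<And>k. k \<notin> I \<Longrightarrow> x k = 0" and y: "\<And>k. k \<notin> I \<Longrightarrow> y k = 0"
  shows "avg_form x y = (\<Sum>l\<in>I. \<Sum>l'\<in>I. x l * cnj (y l') * avg_form (unit_vec l) (unit_vec l'))"
proof -
  have expansion: "z = (\<lambda>k. \<Sum>l\<in>I. z l * unit_vec l k)" if "\<And>k. k \<notin> I \<Longrightarrow> z k = 0" for z
    using that finite_vertices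
    by (auto simp: unit_vec_def fun_eq_iff if_distrib[of "\<lambda>x. _ * x"] cong: if_cong)
  have x_expansion: "x = (\<lambda>k. \<Sum>l\<in>I. x l * unit_vec l k)"
    and y_expansion: "y = (\<lambda>k. \<Sum>l\<in>I. y l * unit_vec l k)"
    using expansion x y by blast+
  have "avg_form x y = (\<Sum>l\<in>I. x l * avg_form (unit_vec l) y)"
    by (subst (1) x_expansion) (rule avg_form_sum_left[OF finite_vertices])
  also have "\<dots> = (\<Sum>l\<in>I. x l * (\<Sum>l'\<in>I. cnj (y l') * avg_form (unit_vec l) (unit_vec l')))"
    by (subst (1) y_expansion) (simp only: avg_form_sum_right[OF finite_vertices])
  finally show ?thesis
    by (simp add: sum_distrib_left ac_simps)
qed

lemma avg_form_unit_vecs_rescale: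
  assumes l: "l \<in> I" and l': "l' \<in> I"
  shows "rescale v l * cnj (rescale v l') * avg_form (unit_vec l) (unit_vec l') =
    complex_of_real (alpha p m l l') * v l * cnj (v l')"
proof (cases "alpha p m l l' = 0")
  case False
  define s where "s = complex_of_real (sqrt (unit_norm l))"
  have N: "complex_of_real (unit_norm l) = s * s" and "s \<noteq> 0"
    using unit_norm_pos[OF l] unfolding s_def by (simp_all flip: of_real_mult)
  have same_norm: "unit_norm l' = unit_norm l"
    using unit_norm_eq_if_alpha_nonzero[OF l l' False] by simp
  have rescaled: "rescale v l = v l / s" "cnj (rescale v l') = cnj (v l') / s"
    using l l' same_norm by (simp_all add: rescale_def s_def)
  show ?thesis
    unfolding avg_form_unit_vecs[OF l l'] same_norm of_real_mult N rescaled
    using \<open>s \<noteq> 0\<close> by (simp add: field_simps)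
qed (simp add: avg_form_unit_vecs[OF l l'])

lemma herm_form_eq_avg_form_rescale: "herm_form I p m v v = avg_form (rescale v) (rescale v)"
proof -
  have "avg_form (rescale v) (rescale v) =
      (\<Sum>l\<in>I. \<Sum>l'\<in>I. rescale v l * cnj (rescale v l') * avg_form (unit_vec l) (unit_vec l'))"
    by (rule avg_form_expand) (simp_all add: rescale_def)
  also have "\<dots> = (\<Sum>l\<in>I. \<Sum>l'\<in>I. complex_of_real (alpha p m l l') * v l * cnj (v l'))"
    by (simp add: avg_form_unit_vecs_rescale)
  finally show ?thesis
    unfolding herm_form_def by simp
qed

lemma herm_form_pos_def: "pos_def_form I (herm_form I p m)"
  unfolding pos_def_form_def
proof (intro allI impI)
  fix v :: "'a \<Rightarrow> complex"
  assume "\<exists>i\<in>I. v i \<noteq> 0"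
  then obtain i where "i \<in> I" and "v i \<noteq> 0" by blast
  then have "rescale v i \<noteq> 0"
    using unit_norm_pos[of i] by (simp add: rescale_def)
  then have "\<exists>i\<in>I. rescale v i \<noteq> 0"
    using \<open>i \<in> I\<close> by blast
  then show "0 < herm_form I p m v v"
    unfolding herm_form_eq_avg_form_rescale by (rule avg_form_pos)
qed

end

theorem proposition2p2:
  fixes I :: "'a set" and p :: "'a \<Rightarrow> nat" and m :: "'a \<Rightarrow> 'a \<Rightarrow> enat"
  assumes "extended_coxeter_diagram I p m"
    and "finite (shephard_group I p m)"
  shows "pos_def_form I (herm_form I p m)"
proof -
  interpret finite_shephard I p m
    using assms by unfold_locales
  show ?thesis by (rule herm_form_pos_def)
qed

end
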